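(* There exists a universal constant $C > 0$ such that for all $p \in (0,1)$, all $n \in \mathbb{N}_+$ and every $z \in \{0,1\}^{2n}$ with an even number of ones, we have $\mathcal{D}_{p,2n}(z) \geq C \cdot \mu_{p,2n}(z)$.
   Context: $\mu_{p,m}$ is the product $p$-biased distribution on $\{0,1\}^m$ (each coordinate equals $1$ independently with probability $p$), and $\mu_{p,m}(z)$ is the probability of $z$. The pull-back distribution $\mathcal{D}_{p,2n}$ on $\{0,1\}^{2n}$ is the distribution of $z$ obtained as follows: draw a uniformly random $2$-to-$1$ map $\pi : [2n] \to [n]$ (every element of $[n]$ has exactly two preimages), draw $x \sim \mu_{p,n}$ independently, and set $z_i = x_{\pi(i)}$ for all $i \in [2n]$; $\mathcal{D}_{p,2n}(z)$ denotes the probability of $z$. *)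

theory Defs
  imports "HOL-Analysis.Analysis"
begin

text \<open>Points of {0,1}^m are represented as functions nat => bool; only the
  values on the index set {0..<m} are relevant (coordinate i is 1 iff z i).\<close>

definition cube :: "nat \<Rightarrow> (nat \<Rightarrow> bool) set" where
  "cube m = PiE {0..<m} (\<lambda>_. UNIV)"

definition mu :: "real \<Rightarrow> nat \<Rightarrow> (nat \<Rightarrow> bool) \<Rightarrow> real" where
  "mu p m z = (\<Prod>i<m. if z i then p else 1 - p)"

definition two_to_one_maps :: "nat \<Rightarrow> (nat \<Rightarrow> nat) set" where
  "two_to_one_maps n = {\<pi> \<in> PiE {0..<2*n} (\<lambda>_. {0..<n}).
       \<forall>j<n. card {i \<in> {0..<2*n}. \<pi> i = j} = 2}"

text \<open>Pull-back distribution D_{p,2n}(z): pi uniform over 2-to-1 maps,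
  x ~ mu_{p,n} independent, z_i = x_{pi(i)}.\<close>
definition pullback :: "real \<Rightarrow> nat \<Rightarrow> (nat \<Rightarrow> bool) \<Rightarrow> real" where
  "pullback p n z =
     (\<Sum>\<pi>\<in>two_to_one_maps n. \<Sum>x\<in>cube n.
        (1 / real (card (two_to_one_maps n))) * mu p n x *
        (if (\<forall>i<2*n. z i = x (\<pi> i)) then 1 else 0))"

end

theory Submission
  imports Defs
begin

text \<open>Let the ones of z form a set S of size 2k. The event that \<pi> maps S two-to-one
  onto some k-set A and the complement of S onto the complement of A, and that x is the
  indicator of A, already has probability C(n,k) / C(2n,2k) * p^k (1-p)^(n-k) by counting
  such maps, whereas \<mu>(z) = (p^k (1-p)^(n-k))^2. Hence C = 1 works, because
  C(2n,2k) p^k (1-p)^(n-k) \<le> C(n,k): with b_i the binomial(n,p) weights, Vandermonde's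
  identity writes C(2n,2k) (p^k (1-p)^(n-k))^2 as the sum of b_i b_(2k-i) over i \<le> 2k,
  log-concavity of the binomial coefficients gives b_i b_(2k-i) \<le> b_k^2, hence by AM-GM
  each term is at most b_k (b_i + b_(2k-i)) / 2, and the whole sum is at most b_k.\<close>

definition two_to_one_on :: "'a set \<Rightarrow> 'b set \<Rightarrow> ('a \<Rightarrow> 'b) set" where
  "two_to_one_on D R = {\<pi> \<in> D \<rightarrow>\<^sub>E R. \<forall>j\<in>R. card {i \<in> D. \<pi> i = j} = 2}"

lemma two_to_one_maps_eq: "two_to_one_maps n = two_to_one_on {0..<2*n} {0..<n}"
  by (auto simp: two_to_one_maps_def two_to_one_on_def)

lemma two_to_one_on_PiE: "\<pi> \<in> two_to_one_on D R \<Longrightarrow> \<pi> \<in> D \<rightarrow>\<^sub>E R"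
  by (simp add: two_to_one_on_def)

lemma finite_two_to_one_on: "finite D \<Longrightarrow> finite R \<Longrightarrow> finite (two_to_one_on D R)"
  by (rule finite_subset[of _ "D \<rightarrow>\<^sub>E R"]) (auto simp: two_to_one_on_def finite_PiE)

lemma two_to_one_on_image:
  assumes "\<pi> \<in> two_to_one_on D R"
  shows "\<pi> ` D = R"
proof
  show "\<pi> ` D \<subseteq> R" using assms by (auto simp: two_to_one_on_def)
  show "R \<subseteq> \<pi> ` D"
  proof
    fix j assume "j \<in> R"
    then have "card {i \<in> D. \<pi> i = j} = 2" using assms by (auto simp: two_to_one_on_def)
    then have "{i \<in> D. \<pi> i = j} \<noteq> {}" by (metis card.empty zero_neq_numeral)
    then show "j \<in> \<pi> ` D" by blast
  qed
qed

lemma restrict_in_two_to_one_on: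
  assumes \<pi>: "\<pi> \<in> two_to_one_on D R" and S: "S = {i \<in> D. \<pi> i \<in> A}"
  shows "restrict \<pi> S \<in> two_to_one_on S (R \<inter> A)"
proof -
  have "{i \<in> S. restrict \<pi> S i = j} = {i \<in> D. \<pi> i = j}" if "j \<in> A" for j
    using that S by auto
  then show ?thesis using \<pi> S by (auto simp: two_to_one_on_def)
qed

lemma glue_in_two_to_one_on:
  assumes \<sigma>: "\<sigma> \<in> two_to_one_on S A" and \<tau>: "\<tau> \<in> two_to_one_on (D - S) B"
    and "S \<subseteq> D" "A \<inter> B = {}"
  shows "(\<lambda>i. if i \<in> S then \<sigma> i else \<tau> i) \<in> two_to_one_on D (A \<union> B)"
    and "{i \<in> D. (if i \<in> S then \<sigma> i else \<tau> i) \<in> A} = S"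
proof -
  let ?\<pi> = "\<lambda>i. if i \<in> S then \<sigma> i else \<tau> i"
  have \<sigma>E: "\<sigma> \<in> S \<rightarrow>\<^sub>E A" and \<tau>E: "\<tau> \<in> (D - S) \<rightarrow>\<^sub>E B"
    using \<sigma> \<tau> by (auto simp: two_to_one_on_def)
  have inA: "?\<pi> i \<in> A" if "i \<in> S" for i
    using \<sigma>E that by auto
  have inB: "?\<pi> i \<in> B" if "i \<in> D - S" for i
    using \<tau>E that by auto
  show "{i \<in> D. ?\<pi> i \<in> A} = S"
    using inA inB assms(3,4) by blast
  have "?\<pi> \<in> D \<rightarrow>\<^sub>E A \<union> B"
    using \<sigma>E \<tau>E assms(3) by (auto simp: PiE_def Pi_def extensional_def)
  moreover have "card {i \<in> D. ?\<pi> i = j} = 2" if "j \<in> A \<union> B" for j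
  proof (cases "j \<in> A")
    case True
    then have "{i \<in> D. ?\<pi> i = j} = {i \<in> S. \<sigma> i = j}"
      using inB assms(3,4) by force
    then show ?thesis using \<sigma> True by (simp add: two_to_one_on_def)
  next
    case False
    then have "{i \<in> D. ?\<pi> i = j} = {i \<in> D - S. \<tau> i = j}"
      using inA that by force
    then show ?thesis using \<tau> False that by (simp add: two_to_one_on_def)
  qed
  ultimately show "?\<pi> \<in> two_to_one_on D (A \<union> B)"
    by (simp add: two_to_one_on_def)
qed

lemma if_restrict_eq:
  assumes "\<pi> \<in> D \<rightarrow>\<^sub>E X" "S \<subseteq> D"
  shows "(\<lambda>i. if i \<in> S then restrict \<pi> S i else restrict \<pi> (D - S) i) = \<pi>"
proof -
  have "\<pi> i = undefined" if "i \<notin> D" for i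
    using assms(1) that by (rule PiE_arb)
  then show ?thesis
    using assms(2) by (auto simp: fun_eq_iff)
qed

lemma restrict_if_eq:
  assumes "\<sigma> \<in> S \<rightarrow>\<^sub>E X" "\<tau> \<in> (D - S) \<rightarrow>\<^sub>E Y"
  shows "restrict (\<lambda>i. if i \<in> S then \<sigma> i else \<tau> i) S = \<sigma>"
    and "restrict (\<lambda>i. if i \<in> S then \<sigma> i else \<tau> i) (D - S) = \<tau>"
proof -
  have "\<sigma> i = undefined" if "i \<notin> S" for i
    using assms(1) that by (rule PiE_arb)
  moreover have "\<tau> i = undefined" if "i \<notin> D - S" for i
    using assms(2) that by (rule PiE_arb)
  ultimately show "restrict (\<lambda>i. if i \<in> S then \<sigma> i else \<tau> i) S = \<sigma>"
    and "restrict (\<lambda>i. if i \<in> S then \<sigma> i else \<tau> i) (D - S) = \<tau>"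
    by (auto simp: fun_eq_iff)
qed

lemma bij_betw_two_to_one_on_split:
  assumes "S \<subseteq> D" "A \<inter> B = {}"
  shows "bij_betw (\<lambda>\<pi>. (restrict \<pi> S, restrict \<pi> (D - S)))
           {\<pi> \<in> two_to_one_on D (A \<union> B). {i \<in> D. \<pi> i \<in> A} = S}
           (two_to_one_on S A \<times> two_to_one_on (D - S) B)"
proof (rule bij_betwI[where g = "\<lambda>(\<sigma>, \<tau>) i. if i \<in> S then \<sigma> i else \<tau> i"])
  show "(\<lambda>\<pi>. (restrict \<pi> S, restrict \<pi> (D - S)))
        \<in> {\<pi> \<in> two_to_one_on D (A \<union> B). {i \<in> D. \<pi> i \<in> A} = S}
          \<rightarrow> two_to_one_on S A \<times> two_to_one_on (D - S) B"
  proof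
    fix \<pi> assume "\<pi> \<in> {\<pi> \<in> two_to_one_on D (A \<union> B). {i \<in> D. \<pi> i \<in> A} = S}"
    then have \<pi>: "\<pi> \<in> two_to_one_on D (A \<union> B)" and S: "S = {i \<in> D. \<pi> i \<in> A}"
      by auto
    have DS: "D - S = {i \<in> D. \<pi> i \<in> B}"
      using two_to_one_on_PiE[OF \<pi>] S assms(2) by auto
    show "(restrict \<pi> S, restrict \<pi> (D - S)) \<in> two_to_one_on S A \<times> two_to_one_on (D - S) B"
      using restrict_in_two_to_one_on[OF \<pi> S] restrict_in_two_to_one_on[OF \<pi> DS] by simp
  qed
  show "(\<lambda>(\<sigma>, \<tau>) i. if i \<in> S then \<sigma> i else \<tau> i)
        \<in> two_to_one_on S A \<times> two_to_one_on (D - S) B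
          \<rightarrow> {\<pi> \<in> two_to_one_on D (A \<union> B). {i \<in> D. \<pi> i \<in> A} = S}"
  proof
    fix y assume "y \<in> two_to_one_on S A \<times> two_to_one_on (D - S) B"
    then obtain \<sigma> \<tau> where y: "y = (\<sigma>, \<tau>)" and \<sigma>: "\<sigma> \<in> two_to_one_on S A"
      and \<tau>: "\<tau> \<in> two_to_one_on (D - S) B"
      by blast
    show "(\<lambda>(\<sigma>, \<tau>) i. if i \<in> S then \<sigma> i else \<tau> i) y
        \<in> {\<pi> \<in> two_to_one_on D (A \<union> B). {i \<in> D. \<pi> i \<in> A} = S}"
      unfolding y prod.case mem_Collect_eq using glue_in_two_to_one_on[OF \<sigma> \<tau> assms] ..
  qed
  show "(\<lambda>(\<sigma>, \<tau>) i. if i \<in> S then \<sigma> i else \<tau> i) (restrict \<pi> S, restrict \<pi> (D - S)) = \<pi>"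
    if "\<pi> \<in> {\<pi> \<in> two_to_one_on D (A \<union> B). {i \<in> D. \<pi> i \<in> A} = S}" for \<pi>
  proof -
    from that have "\<pi> \<in> D \<rightarrow>\<^sub>E A \<union> B"
      by (simp add: two_to_one_on_def)
    from if_restrict_eq[OF this assms(1)] show ?thesis
      by simp
  qed
  show "(\<lambda>\<pi>. (restrict \<pi> S, restrict \<pi> (D - S))) ((\<lambda>(\<sigma>, \<tau>) i. if i \<in> S then \<sigma> i else \<tau> i) y) = y"
    if "y \<in> two_to_one_on S A \<times> two_to_one_on (D - S) B" for y
    using that restrict_if_eq[OF two_to_one_on_PiE two_to_one_on_PiE] by auto
qed

lemma card_two_to_one_on_split:
  assumes "S \<subseteq> D" "A \<inter> B = {}"
  shows "card {\<pi> \<in> two_to_one_on D (A \<union> B). {i \<in> D. \<pi> i \<in> A} = S}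
           = card (two_to_one_on S A) * card (two_to_one_on (D - S) B)"
  using bij_betw_same_card[OF bij_betw_two_to_one_on_split[OF assms]]
  by (simp add: card_cartesian_product)

lemma two_to_one_on_singleton:
  assumes "card P = 2"
  shows "two_to_one_on P {r} = {restrict (\<lambda>_. r) P}"
proof -
  have "P \<rightarrow>\<^sub>E {r} = {restrict (\<lambda>_. r) P}"
    using PiE_singleton[of "restrict (\<lambda>_. r) P" P] by simp
  moreover have "card {i \<in> P. restrict (\<lambda>_. r) P i = r} = 2"
    using assms by simp
  ultimately show ?thesis
    unfolding two_to_one_on_def by blast
qed

lemma card_two_to_one_on_insert:
  assumes "finite D" "finite R" "r \<notin> R"
  shows "card (two_to_one_on D (insert r R))
           = (\<Sum>P\<in>{P. P \<subseteq> D \<and> card P = 2}. card (two_to_one_on (D - P) R))"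
proof -
  define Ps where "Ps = {P. P \<subseteq> D \<and> card P = 2}"
  define F where "F P = {\<pi> \<in> two_to_one_on D ({r} \<union> R). {i \<in> D. \<pi> i \<in> {r}} = P}" for P
  have "finite Ps"
    using assms(1) by (simp add: Ps_def)
  moreover have "finite (F P)" for P
    using finite_two_to_one_on[of D "{r} \<union> R"] assms by (simp add: F_def)
  moreover have "F P \<inter> F Q = {}" if "P \<noteq> Q" for P Q
    using that by (auto simp: F_def)
  moreover have "two_to_one_on D (insert r R) = (\<Union>P\<in>Ps. F P)"
  proof
    show "two_to_one_on D (insert r R) \<subseteq> (\<Union>P\<in>Ps. F P)"
    proof
      fix \<pi> assume \<pi>: "\<pi> \<in> two_to_one_on D (insert r R)"
      then have "{i \<in> D. \<pi> i = r} \<in> Ps"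
        unfolding two_to_one_on_def Ps_def by auto
      moreover have "\<pi> \<in> F {i \<in> D. \<pi> i = r}"
        using \<pi> by (simp add: F_def)
      ultimately show "\<pi> \<in> (\<Union>P\<in>Ps. F P)" by blast
    qed
  qed (auto simp: F_def)
  ultimately have "card (two_to_one_on D (insert r R)) = (\<Sum>P\<in>Ps. card (F P))"
    by (simp add: card_UN_disjoint)
  also have "\<dots> = (\<Sum>P\<in>Ps. card (two_to_one_on (D - P) R))"
  proof (rule sum.cong)
    fix P assume "P \<in> Ps"
    then show "card (F P) = card (two_to_one_on (D - P) R)"
      using card_two_to_one_on_split[of P D "{r}" R] assms(3)
      by (simp add: F_def Ps_def two_to_one_on_singleton)
  qed simp
  finally show ?thesis
    by (simp add: Ps_def)
qed

lemma card_two_to_one_on: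
  assumes "finite R" "finite D" "card D = 2 * card R"
  shows "card (two_to_one_on D R) * 2 ^ card R = fact (card D)"
  using assms
proof (induction R arbitrary: D rule: finite_induct)
  case empty
  then show ?case by (simp add: two_to_one_on_def)
next
  case (insert r R D)
  define Ps where "Ps = {P. P \<subseteq> D \<and> card P = 2}"
  have cardD: "card D = 2 * card R + 2"
    using insert by simp
  have IH: "card (two_to_one_on (D - P) R) * 2 ^ card R = fact (card D - 2)" if "P \<in> Ps" for P
  proof -
    have P: "P \<subseteq> D" "card P = 2"
      using that by (auto simp: Ps_def)
    then have "card (D - P) = card D - 2"
      using card_Diff_subset[OF finite_subset[OF P(1) insert.prems(1)] P(1)] by simp
    then show ?thesis
      using insert.IH[of "D - P"] insert.prems(1) cardD by simp
  qed
  have "card (two_to_one_on D (insert r R)) * 2 ^ card (insert r R)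
      = (\<Sum>P\<in>Ps. card (two_to_one_on (D - P) R) * 2 ^ card R) * 2"
    using card_two_to_one_on_insert[OF insert.prems(1) insert.hyps(1,2)] insert.hyps
    by (simp add: Ps_def mult_ac flip: sum_distrib_right)
  also have "\<dots> = card Ps * fact (card D - 2) * 2"
    by (simp add: IH)
  also have "\<dots> = fact (card D)"
    using n_subsets[OF insert.prems(1), of 2] binomial_fact_lemma[of 2 "card D"] cardD
    by (simp add: Ps_def mult_ac)
  finally show ?case .
qed

lemma card_two_to_one_maps: "card (two_to_one_maps n) * 2 ^ n = fact (2 * n)"
  using card_two_to_one_on[of "{0..<n}" "{0..<2 * n}"] by (simp add: two_to_one_maps_eq)

lemma card_two_to_one_on_preimage_eq:
  assumes "finite D" "finite R" "card D = 2 * card R" "S \<subseteq> D" "card S = 2 * k"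
  shows "card (\<Union>A\<in>{A. A \<subseteq> R \<and> card A = k}. {\<pi> \<in> two_to_one_on D R. {i \<in> D. \<pi> i \<in> A} = S})
           * 2 ^ card R = (card R choose k) * fact (2 * k) * fact (card D - 2 * k)"
proof -
  define Ks where "Ks = {A. A \<subseteq> R \<and> card A = k}"
  define F where "F A = {\<pi> \<in> two_to_one_on D R. {i \<in> D. \<pi> i \<in> A} = S}" for A
  have "k \<le> card R"
    using card_mono[OF assms(1,4)] assms(3,5) by simp
  have F_image: "\<pi> ` S = A" if "\<pi> \<in> F A" "A \<subseteq> R" for \<pi> A
    using two_to_one_on_image[of \<pi> D R] that by (auto simp: F_def)
  have card_F: "card (F A) * 2 ^ card R = fact (2 * k) * fact (card D - 2 * k)" if "A \<in> Ks" for A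
  proof -
    have A: "A \<subseteq> R" "card A = k" "finite A"
      using that assms(2) by (auto simp: Ks_def finite_subset)
    have "card (two_to_one_on S A) * 2 ^ k = fact (2 * k)"
      using card_two_to_one_on[of A S] A assms(1,4,5) by (simp add: finite_subset)
    moreover have "card (two_to_one_on (D - S) (R - A)) * 2 ^ (card R - k) = fact (card D - 2 * k)"
      using card_two_to_one_on[of "R - A" "D - S"] A assms
      by (simp add: card_Diff_subset finite_subset diff_mult_distrib2)
    moreover have "card (F A) = card (two_to_one_on S A) * card (two_to_one_on (D - S) (R - A))"
      using card_two_to_one_on_split[of S D A "R - A"] A(1) assms(4)
      by (simp add: F_def Un_absorb1)
    moreover have "(2::nat) ^ card R = 2 ^ k * 2 ^ (card R - k)"
      using \<open>k \<le> card R\<close> by (simp flip: power_add)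
    ultimately show ?thesis
      by (simp add: mult_ac)
  qed
  have "finite (F A)" for A
    using finite_two_to_one_on[OF assms(1,2)] by (simp add: F_def)
  moreover have "F A \<inter> F A' = {}" if "A \<in> Ks" "A' \<in> Ks" "A \<noteq> A'" for A A'
    using that F_image unfolding Ks_def by blast
  ultimately have "card (\<Union>A\<in>Ks. F A) = (\<Sum>A\<in>Ks. card (F A))"
    using assms(2) by (intro card_UN_disjoint) (auto simp: Ks_def)
  then have "card (\<Union>A\<in>Ks. F A) * 2 ^ card R = card Ks * (fact (2 * k) * fact (card D - 2 * k))"
    by (simp add: sum_distrib_right card_F)
  then show ?thesis
    using n_subsets[OF assms(2), of k] by (simp add: Ks_def F_def mult_ac)
qed

lemma binomial_mult_le_step:
  assumes "a < b"
  shows "(n choose a) * (n choose b) \<le> (n choose Suc a) * (n choose (b - 1))"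
proof (cases "b \<le> n")
  case False
  then show ?thesis by (simp add: binomial_eq_0)
next
  case True
  obtain c where c: "b = Suc c" using assms by (cases b) auto
  have step: "(n choose Suc j) * Suc j = (n choose j) * (n - j)" for j
    using binomial_absorption[of j n] binomial_absorb_comp[of n j] by (simp add: mult.commute)
  have "(n choose a) * (n choose b) * (Suc a * Suc c)
      = (n choose a) * (n choose c) * (Suc a * (n - c))"
    using step[of c] c by (simp only: mult_ac)
  also have "\<dots> \<le> (n choose a) * (n choose c) * (Suc c * (n - a))"
    using assms c True by (intro mult_le_mono2 mult_le_mono) auto
  also have "\<dots> = ((n choose Suc a) * Suc a) * (n choose c) * Suc c"
    unfolding step by (simp only: mult_ac)
  also have "\<dots> = (n choose Suc a) * (n choose c) * (Suc a * Suc c)"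
    by (simp only: mult_ac)
  finally have "(n choose a) * (n choose b) \<le> (n choose Suc a) * (n choose c)"
    by (rule mult_right_le_imp_le) simp
  then show ?thesis
    using c by simp
qed

lemma binomial_mult_binomial_le_square:
  assumes "d \<le> k"
  shows "(n choose (k - d)) * (n choose (k + d)) \<le> (n choose k)\<^sup>2"
  using assms
proof (induction d)
  case 0
  then show ?case by (simp add: power2_eq_square)
next
  case (Suc d)
  have "(n choose (k - Suc d)) * (n choose (k + Suc d))
      \<le> (n choose Suc (k - Suc d)) * (n choose (k + Suc d - 1))"
    by (rule binomial_mult_le_step) simp
  also have "\<dots> = (n choose (k - d)) * (n choose (k + d))"
    using Suc.prems by (simp add: Suc_diff_Suc)
  finally show ?case using Suc by linarith
qed

lemma binomial_mult_binomial_reflect_le_square: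
  assumes "i \<le> 2 * k"
  shows "(n choose i) * (n choose (2 * k - i)) \<le> (n choose k)\<^sup>2"
proof (cases "i \<le> k")
  case True
  then show ?thesis
    using binomial_mult_binomial_le_square[of "k - i" k n] assms by (simp add: mult_2)
next
  case False
  then have e: "k - (i - k) = 2 * k - i" "k + (i - k) = i"
    using assms by auto
  show ?thesis
    using binomial_mult_binomial_le_square[of "i - k" k n] False assms
    unfolding e by (simp add: mult.commute)
qed

lemma mult_le_mult_mean_if_le_square:
  fixes x y c :: real
  assumes "0 \<le> x" "0 \<le> y" "0 \<le> c" "x * y \<le> c\<^sup>2"
  shows "x * y \<le> c * (x + y) / 2"
proof (cases "(x + y) / 2 \<le> c")
  case True
  have "x * y \<le> ((x + y) / 2)\<^sup>2"
    using sum_squares_ge_zero[of "x - y" 0] by (simp add: power2_eq_square field_simps)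
  also have "\<dots> \<le> c * ((x + y) / 2)"
    unfolding power2_eq_square using True assms by (intro mult_right_mono) auto
  finally show ?thesis by simp
next
  case False
  then have "c * c \<le> c * ((x + y) / 2)"
    using assms(3) by (intro mult_left_mono) auto
  then show ?thesis
    using assms(4) by (simp add: power2_eq_square)
qed

definition binomial_weight :: "nat \<Rightarrow> real \<Rightarrow> nat \<Rightarrow> real" where
  "binomial_weight n p i = real (n choose i) * p ^ i * (1 - p) ^ (n - i)"

lemma binomial_weight_nonneg: "0 \<le> p \<Longrightarrow> p \<le> 1 \<Longrightarrow> 0 \<le> binomial_weight n p i"
  by (simp add: binomial_weight_def)

lemma sum_binomial_weight_le_one:
  assumes "0 \<le> p" "p \<le> 1"
  shows "(\<Sum>i\<le>N. binomial_weight n p i) \<le> 1"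
proof -
  have "(\<Sum>i\<le>N. binomial_weight n p i) \<le> (\<Sum>i\<le>N + n. binomial_weight n p i)"
    by (rule sum_mono2) (auto simp: binomial_weight_nonneg assms)
  also have "\<dots> = (\<Sum>i\<le>n. binomial_weight n p i)"
    by (rule sum.mono_neutral_right) (auto simp: binomial_weight_def)
  also have "\<dots> = 1"
    using binomial_ring[of p "1 - p" n] by (simp add: binomial_weight_def mult.assoc)
  finally show ?thesis .
qed

lemma binomial_weight_mult_reflect:
  assumes "i \<le> 2 * k" "k \<le> n"
  shows "binomial_weight n p i * binomial_weight n p (2 * k - i)
           = real ((n choose i) * (n choose (2 * k - i))) * (p ^ k * (1 - p) ^ (n - k))\<^sup>2"
proof (cases "i \<le> n \<and> 2 * k - i \<le> n")
  case True
  have "p ^ i * p ^ (2 * k - i) = (p ^ k)\<^sup>2"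
    using assms(1) by (simp flip: power_add power_mult add: mult.commute)
  moreover have "n - i + (n - (2 * k - i)) = (n - k) * 2"
    using assms True by arith
  then have "(1 - p) ^ (n - i) * (1 - p) ^ (n - (2 * k - i)) = ((1 - p) ^ (n - k))\<^sup>2"
    by (simp flip: power_add power_mult)
  ultimately show ?thesis
    by (simp add: binomial_weight_def power_mult_distrib mult_ac)
next
  case False
  then show ?thesis by (auto simp: binomial_weight_def)
qed

lemma binomial_weight_mult_reflect_le_square:
  assumes "i \<le> 2 * k" "k \<le> n"
  shows "binomial_weight n p i * binomial_weight n p (2 * k - i) \<le> (binomial_weight n p k)\<^sup>2"
proof -
  have "(n choose i) * (n choose (2 * k - i)) \<le> (n choose k)\<^sup>2"
    using assms(1) by (rule binomial_mult_binomial_reflect_le_square)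
  then have "real ((n choose i) * (n choose (2 * k - i))) * (p ^ k * (1 - p) ^ (n - k))\<^sup>2
      \<le> real ((n choose k)\<^sup>2) * (p ^ k * (1 - p) ^ (n - k))\<^sup>2"
    by (intro mult_right_mono) (simp_all only: of_nat_le_iff zero_le_power2)
  then show ?thesis
    unfolding binomial_weight_mult_reflect[OF assms]
    by (simp add: binomial_weight_def power_mult_distrib mult_ac)
qed

lemma sum_binomial_weight_mult_reflect:
  assumes "k \<le> n"
  shows "(\<Sum>i\<le>2 * k. binomial_weight n p i * binomial_weight n p (2 * k - i))
           = real ((2 * n) choose (2 * k)) * (p ^ k * (1 - p) ^ (n - k))\<^sup>2"
proof -
  have "(\<Sum>i\<le>2 * k. binomial_weight n p i * binomial_weight n p (2 * k - i))
      = real (\<Sum>i\<le>2 * k. (n choose i) * (n choose (2 * k - i))) * (p ^ k * (1 - p) ^ (n - k))\<^sup>2"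
    unfolding of_nat_sum sum_distrib_right
    by (rule sum.cong) (simp_all add: binomial_weight_mult_reflect assms)
  also have "\<dots> = real ((2 * n) choose (2 * k)) * (p ^ k * (1 - p) ^ (n - k))\<^sup>2"
    unfolding vandermonde by (simp add: mult_2)
  finally show ?thesis .
qed

lemma binomial_double_weight_le:
  fixes p :: real
  assumes p: "0 \<le> p" "p \<le> 1" and "k \<le> n"
  shows "real ((2 * n) choose (2 * k)) * (p ^ k * (1 - p) ^ (n - k)) \<le> real (n choose k)"
proof -
  define m where "m = p ^ k * (1 - p) ^ (n - k)"
  define b where "b = binomial_weight n p"
  have b_nonneg: "0 \<le> b i" for i
    using p by (simp add: b_def binomial_weight_nonneg)
  have "real ((2 * n) choose (2 * k)) * m\<^sup>2 = (\<Sum>i\<le>2 * k. b i * b (2 * k - i))"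
    using sum_binomial_weight_mult_reflect[OF \<open>k \<le> n\<close>] by (simp add: b_def m_def)
  also have "\<dots> \<le> (\<Sum>i\<le>2 * k. b k * (b i + b (2 * k - i)) / 2)"
    using binomial_weight_mult_reflect_le_square[OF _ \<open>k \<le> n\<close>]
    by (intro sum_mono mult_le_mult_mean_if_le_square b_nonneg) (simp add: b_def)
  also have "\<dots> = b k * ((\<Sum>i\<le>2 * k. b i) + (\<Sum>i\<le>2 * k. b (2 * k - i))) / 2"
    by (simp add: sum_distrib_left sum.distrib algebra_simps flip: sum_divide_distrib)
  also have "(\<Sum>i\<le>2 * k. b (2 * k - i)) = (\<Sum>i\<le>2 * k. b i)"
    by (rule sum.reindex_bij_witness[where i = "\<lambda>i. 2 * k - i" and j = "\<lambda>i. 2 * k - i"]) auto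
  also have "b k * ((\<Sum>i\<le>2 * k. b i) + (\<Sum>i\<le>2 * k. b i)) / 2 \<le> b k"
    using sum_binomial_weight_le_one[where N = "2 * k" and n = n, OF p] b_nonneg[of k]
    by (simp add: b_def mult_left_le)
  finally have ineq: "real ((2 * n) choose (2 * k)) * m * m \<le> real (n choose k) * m"
    by (simp add: b_def binomial_weight_def m_def power2_eq_square mult.assoc)
  have "real ((2 * n) choose (2 * k)) * m \<le> real (n choose k)"
  proof (cases "m = 0")
    case False
    moreover have "0 \<le> m"
      using p by (simp add: m_def)
    ultimately show ?thesis
      using mult_right_le_imp_le[OF ineq] by simp
  qed simp
  then show ?thesis
    by (simp add: m_def)
qed

lemma mu_eq_power:
  "mu p m z = p ^ card {i \<in> {0..<m}. z i} * (1 - p) ^ (m - card {i \<in> {0..<m}. z i})"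
proof -
  have "mu p m z = (\<Prod>i\<in>{0..<m}. if z i then p else 1 - p)"
    by (simp add: mu_def atLeast0LessThan)
  also have "\<dots> = p ^ card {i \<in> {0..<m}. z i} * (1 - p) ^ card {i \<in> {0..<m}. \<not> z i}"
    by (simp add: prod.If_cases Int_def)
  also have "{i \<in> {0..<m}. \<not> z i} = {0..<m} - {i \<in> {0..<m}. z i}"
    by auto
  also have "card \<dots> = m - card {i \<in> {0..<m}. z i}"
    by (subst card_Diff_subset) auto
  finally show ?thesis .
qed

lemma mu_nonneg: "0 \<le> p \<Longrightarrow> p \<le> 1 \<Longrightarrow> 0 \<le> mu p m z"
  by (simp add: mu_def prod_nonneg)

lemma mu_restrict_indicator:
  assumes "A \<subseteq> {0..<m}"
  shows "mu p m (restrict (\<lambda>j. j \<in> A) {0..<m}) = p ^ card A * (1 - p) ^ (m - card A)"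
proof -
  have "{j \<in> {0..<m}. restrict (\<lambda>j. j \<in> A) {0..<m} j} = A"
    using assms by auto
  then show ?thesis
    by (simp only: mu_eq_power)
qed

lemma pullback_ge_compatible:
  assumes "0 \<le> p" "p \<le> 1" "M \<subseteq> two_to_one_maps n"
    and "\<And>\<pi>. \<pi> \<in> M \<Longrightarrow> \<exists>x\<in>cube n. mu p n x = m \<and> (\<forall>i<2 * n. z i = x (\<pi> i))"
  shows "real (card M) / real (card (two_to_one_maps n)) * m \<le> pullback p n z"
proof -
  define w where "w \<pi> = (\<Sum>x\<in>cube n. 1 / real (card (two_to_one_maps n)) * mu p n x *
      (if \<forall>i<2 * n. z i = x (\<pi> i) then 1 else 0))" for \<pi>
  have fin: "finite (two_to_one_maps n)" "finite (cube n)"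
    by (simp_all add: two_to_one_maps_eq finite_two_to_one_on cube_def finite_PiE)
  have w_nonneg: "0 \<le> w \<pi>" for \<pi>
    using mu_nonneg[OF assms(1,2)] by (simp add: w_def sum_nonneg)
  have w_ge: "m / real (card (two_to_one_maps n)) \<le> w \<pi>" if \<pi>: "\<pi> \<in> M" for \<pi>
  proof -
    obtain x where x: "x \<in> cube n" "mu p n x = m" "\<forall>i<2 * n. z i = x (\<pi> i)"
      using assms(4)[OF \<pi>] by blast
    then have "m / real (card (two_to_one_maps n)) = 1 / real (card (two_to_one_maps n)) * mu p n x *
        (if \<forall>i<2 * n. z i = x (\<pi> i) then 1 else 0)"
      by simp
    also have "\<dots> \<le> w \<pi>"
      unfolding w_def by (rule member_le_sum[OF x(1) _ fin(2)]) (use mu_nonneg[OF assms(1,2)] in auto)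
    finally show ?thesis .
  qed
  have "real (card M) / real (card (two_to_one_maps n)) * m = (\<Sum>\<pi>\<in>M. m / real (card (two_to_one_maps n)))"
    by simp
  also have "\<dots> \<le> (\<Sum>\<pi>\<in>M. w \<pi>)"
    by (rule sum_mono) (rule w_ge)
  also have "\<dots> \<le> (\<Sum>\<pi>\<in>two_to_one_maps n. w \<pi>)"
    by (rule sum_mono2[OF fin(1) assms(3)]) (rule w_nonneg)
  also have "\<dots> = pullback p n z"
    by (simp add: pullback_def w_def)
  finally show ?thesis .
qed

lemma pullback_ge_binomial_ratio:
  assumes p: "0 \<le> p" "p \<le> 1" and k: "card {i \<in> {0..<2 * n}. z i} = 2 * k"
  shows "real (n choose k) / real ((2 * n) choose (2 * k)) * (p ^ k * (1 - p) ^ (n - k))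
           \<le> pullback p n z"
proof -
  define U where "U = {0..<2 * n}"
  define R where "R = {0..<n::nat}"
  define S where "S = {i \<in> U. z i}"
  define M where "M = (\<Union>A\<in>{A. A \<subseteq> R \<and> card A = k}.
                    {\<pi> \<in> two_to_one_on U R. {i \<in> U. \<pi> i \<in> A} = S})"
  have "S \<subseteq> U" "card S = 2 * k" "card U = 2 * card R"
    using k by (auto simp: S_def U_def R_def)
  then have "k \<le> n"
    using card_mono[of U S] by (simp add: U_def R_def)
  have card_M: "card M * 2 ^ n = (n choose k) * fact (2 * k) * fact (2 * n - 2 * k)"
    using card_two_to_one_on_preimage_eq[of U R S k] \<open>S \<subseteq> U\<close> \<open>card S = 2 * k\<close>
    by (simp add: M_def U_def R_def)
  have card_T: "card (two_to_one_maps n) * 2 ^ n = ((2 * n) choose (2 * k)) * fact (2 * k) * fact (2 * n - 2 * k)"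
    using card_two_to_one_maps binomial_fact_lemma[of "2 * k" "2 * n"] \<open>k \<le> n\<close>
    by (simp add: mult_ac)
  have "real (card M) / real (card (two_to_one_maps n))
      = real (card M * 2 ^ n) / real (card (two_to_one_maps n) * 2 ^ n)"
    by simp
  also have "\<dots> = real (n choose k) / real ((2 * n) choose (2 * k))"
    unfolding card_M card_T by simp
  finally have ratio: "real (card M) / real (card (two_to_one_maps n))
      = real (n choose k) / real ((2 * n) choose (2 * k))" .
  have M_compatible:
    "\<exists>x\<in>cube n. mu p n x = p ^ k * (1 - p) ^ (n - k) \<and> (\<forall>i<2 * n. z i = x (\<pi> i))"
    if "\<pi> \<in> M" for \<pi>
  proof -
    obtain A where A: "A \<subseteq> R" "card A = k" and \<pi>: "\<pi> \<in> two_to_one_on U R"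
      and fibre: "{i \<in> U. \<pi> i \<in> A} = S"
      using \<open>\<pi> \<in> M\<close> by (auto simp: M_def)
    have "z i = restrict (\<lambda>j. j \<in> A) R (\<pi> i)" if "i < 2 * n" for i
      using that two_to_one_on_PiE[OF \<pi>] fibre by (auto simp: U_def S_def)
    moreover have "restrict (\<lambda>j. j \<in> A) R \<in> cube n"
      by (simp add: cube_def R_def)
    ultimately show ?thesis
      using mu_restrict_indicator[of A n p] A by (auto simp: R_def)
  qed
  have "M \<subseteq> two_to_one_maps n"
    by (auto simp: M_def two_to_one_maps_eq U_def R_def)
  from pullback_ge_compatible[OF p this M_compatible] show ?thesis
    by (simp add: ratio)
qed

theorem mainTheorem2:
  shows "\<exists>C::real. C > 0 \<and>
    (\<forall>p::real. \<forall>n::nat. \<forall>z. 0 < p \<and> p < 1 \<and> n \<ge> 1 \<and> z \<in> cube (2*n)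
       \<and> even (card {i \<in> {0..<2*n}. z i})
       \<longrightarrow> pullback p n z \<ge> C * mu p (2*n) z)"
proof (intro exI[of _ 1] conjI allI impI)
  fix p :: real and n :: nat and z :: "nat \<Rightarrow> bool"
  assume "0 < p \<and> p < 1 \<and> n \<ge> 1 \<and> z \<in> cube (2*n) \<and> even (card {i \<in> {0..<2*n}. z i})"
  then have p: "0 \<le> p" "p \<le> 1" and "even (card {i \<in> {0..<2*n}. z i})"
    by auto
  then obtain k where k: "card {i \<in> {0..<2 * n}. z i} = 2 * k"
    by (auto elim: evenE)
  define m where "m = p ^ k * (1 - p) ^ (n - k)"
  have "2 * k \<le> 2 * n"
    unfolding k[symmetric] by (rule order.trans[OF card_mono[of "{0..<2 * n}"]]) auto
  then have "k \<le> n" by simp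
  have "0 \<le> m"
    using p by (simp add: m_def)
  have "mu p (2 * n) z = p ^ (2 * k) * (1 - p) ^ (2 * (n - k))"
    unfolding mu_eq_power k by (simp flip: diff_mult_distrib2)
  also have "\<dots> = m * m"
    unfolding power_even_eq m_def by (simp add: power2_eq_square mult_ac)
  also have "\<dots> \<le> real (n choose k) / real ((2 * n) choose (2 * k)) * m"
    using binomial_double_weight_le[OF p \<open>k \<le> n\<close>] \<open>k \<le> n\<close> \<open>0 \<le> m\<close>
    by (intro mult_right_mono) (simp_all add: m_def pos_le_divide_eq mult.commute)
  also have "\<dots> \<le> pullback p n z"
    using pullback_ge_binomial_ratio[OF p k] by (simp add: m_def)
  finally show "1 * mu p (2 * n) z \<le> pullback p n z"
    by simp
qed (simp)

end
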